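(* Consider $\min_u F(u)+G(u)$ under the assumptions below, with $G$ additionally convex. Let $\{(y^t,z^t,x^t)\}$ be generated by the modified PR iteration with $\gamma\in(0,\frac1{12L_F})$, and let $(\bar y,\bar z,\bar x)$ be any cluster point of this sequence. Then $\bar y=\bar z$ and $\bar z$ is a minimizer of $F+G$. Moreover, for every $N\ge1$, \[ F(\bar z^N)+G(\bar z^N)-F(\bar z)-G(\bar z)\le\frac{1}{40\gamma N L_F}\left(\frac1\gamma-5L_F\right)\|x^0-\bar x\|^2, \] where $\bar z^N:=\frac1N\sum_{t=1}^N z^t$, and \[ \min_{0\le t\le N}\|x^{t+1}-x^t\|=o\!\left(\frac{1}{\sqrt N}\right)\quad (N\to\infty). \]
   Context: Assumptions: $F:\mathbb{R}^n\to\mathbb{R}$ is convex and differentiable with $\nabla F$ Lipschitz continuous with modulus at most $L_F>0$; $G:\mathbb{R}^n\to(-\infty,\infty]$ is proper, lower semicontinuous, and $\operatorname{Argmin}_u\{\tau G(u)+\frac12\|u-w\|^2\}$ is nonempty for every $w$ and every $\tau>0$; $F+G$ is coercive. Modified PR iteration: given $x^0$ and $\gamma\in(0,\frac1{12L_F})$, for $t=0,1,\dots$: $y^{t+1}=\operatorname{argmin}_y\{F(y)+\frac{5L_F}{2}\|y\|^2+\frac1{2\gamma}\|y-x^t\|^2\}$; $z^{t+1}\in\operatorname{Argmin}_z\{G(z)-\frac{5L_F}{2}\|z\|^2+\frac1{2\gamma}\|2y^{t+1}-x^t-z\|^2\}$; $x^{t+1}=x^t+2(z^{t+1}-y^{t+1})$.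 *)

theory Defs
  imports "HOL-Analysis.Analysis" "HOL-Library.Landau_Symbols"
begin

definition proper_fun :: "('a \<Rightarrow> ereal) \<Rightarrow> bool" where
  "proper_fun G \<longleftrightarrow> (\<forall>x. G x \<noteq> -\<infinity>) \<and> (\<exists>x. G x \<noteq> \<infinity>)"

definition lsc_fun :: "('a::topological_space \<Rightarrow> ereal) \<Rightarrow> bool" where
  "lsc_fun G \<longleftrightarrow> (\<forall>x X. X \<longlonglongrightarrow> x \<longrightarrow> G x \<le> liminf (\<lambda>k. G (X k)))"

definition convex_efun :: "('a::real_vector \<Rightarrow> ereal) \<Rightarrow> bool" where
  "convex_efun G \<longleftrightarrow> (\<forall>x y t. 0 \<le> t \<and> t \<le> 1 \<longrightarrow>
      G ((1 - t) *\<^sub>R x + t *\<^sub>R y) \<le> ereal (1 - t) * G x + ereal t * G y)"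

definition coercive_efun :: "('a::real_normed_vector \<Rightarrow> ereal) \<Rightarrow> bool" where
  "coercive_efun H \<longleftrightarrow> (\<forall>M::real. \<exists>R. \<forall>x. norm x \<ge> R \<longrightarrow> H x \<ge> ereal M)"

end

theory Submission
  imports Defs
begin

text \<open>
  Write \<open>r = 5L\<gamma>\<close>. Optimality of the smooth \<open>y\<close>-subproblem gives
  \<open>x\<^sup>t = (1 + r) y\<^sup>t\<^sup>+\<^sup>1 + \<gamma> \<nabla>F(y\<^sup>t\<^sup>+\<^sup>1)\<close>, and the \<open>z\<close>-subproblem makes
  \<open>((1 + r) z\<^sup>t\<^sup>+\<^sup>1 - x\<^sup>t\<^sup>+\<^sup>1) / \<gamma>\<close> a subgradient of the convex function \<open>G\<close> at \<open>z\<^sup>t\<^sup>+\<^sup>1\<close>.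
  For a minimizer \<open>u\<close> of \<open>F + G\<close> and \<open>x\<^sup>* = (1 + r) u + \<gamma> \<nabla>F(u)\<close>, combining monotonicity
  of \<open>\<partial>G\<close>, cocoercivity of \<open>\<nabla>F\<close> and the convexity and descent inequalities for \<open>F\<close> yields,
  as long as \<open>r \<le> 5/12\<close> (that is, \<open>\<gamma> < 1/(12L)\<close>), the Fejer-type estimate
  \<open>\<gamma> ((F+G)(z\<^sup>t\<^sup>+\<^sup>1) - (F+G)(u)) + (5 - 7r)/10 \<parallel>y\<^sup>t\<^sup>+\<^sup>1 - z\<^sup>t\<^sup>+\<^sup>1\<parallel>\<^sup>2
     \<le> (1 - r)/(8r) (\<parallel>x\<^sup>t - x\<^sup>*\<parallel>\<^sup>2 - \<parallel>x\<^sup>t\<^sup>+\<^sup>1 - x\<^sup>*\<parallel>\<^sup>2)\<close>.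
  Telescoping shows that the increments \<open>x\<^sup>t\<^sup>+\<^sup>1 - x\<^sup>t = 2 (z\<^sup>t\<^sup>+\<^sup>1 - y\<^sup>t\<^sup>+\<^sup>1)\<close> are square summable,
  which gives \<open>yb = zb\<close> at every cluster point and the \<open>o(1/\<surd>N)\<close> bound; passing to the limit
  in the subgradient inequality shows that \<open>zb\<close> is a minimizer with \<open>xb = x\<^sup>*\<close>, and telescoping
  once more together with Jensen's inequality gives the ergodic rate.
\<close>

lemma convex_on_gradient_ineq:
  fixes F :: "'a::real_inner \<Rightarrow> real"
  assumes cvx: "convex_on UNIV F"
    and der: "(F has_derivative (\<lambda>h. g \<bullet> h)) (at u)"
  shows "F u + g \<bullet> (v - u) \<le> F v"
proof -
  define \<phi> where "\<phi> = (\<lambda>t::real. F (u + t *\<^sub>R (v - u)))"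
  have "convex_on UNIV \<phi>"
    unfolding convex_on_def \<phi>_def
  proof (intro conjI allI impI ballI)
    fix s t a b :: real assume ab: "0 \<le> a" "0 \<le> b" "a + b = 1"
    have "u + (a *\<^sub>R s + b *\<^sub>R t) *\<^sub>R (v - u) = a *\<^sub>R (u + s *\<^sub>R (v - u)) + b *\<^sub>R (u + t *\<^sub>R (v - u))"
      using ab by (simp add: algebra_simps) (metis scaleR_add_left scaleR_one)
    then show "F (u + (a *\<^sub>R s + b *\<^sub>R t) *\<^sub>R (v - u))
        \<le> a * F (u + s *\<^sub>R (v - u)) + b * F (u + t *\<^sub>R (v - u))"
      using cvx ab unfolding convex_on_def by auto
  qed simp
  have "(\<phi> has_field_derivative (g \<bullet> (v - u))) (at 0)"
  proof -
    have "((\<lambda>t::real. u + t *\<^sub>R (v - u)) has_derivative (\<lambda>t. t *\<^sub>R (v - u))) (at 0)"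
      by (auto intro!: derivative_eq_intros)
    moreover have "(F has_derivative (\<lambda>h. g \<bullet> h)) (at (u + 0 *\<^sub>R (v - u)))"
      using der by simp
    ultimately have "((\<lambda>t. F (u + t *\<^sub>R (v - u))) has_derivative (\<lambda>t. g \<bullet> (t *\<^sub>R (v - u)))) (at 0)"
      by (rule has_derivative_compose)
    then have "(\<phi> has_derivative (\<lambda>t. t * (g \<bullet> (v - u)))) (at 0)"
      by (simp add: \<phi>_def)
    then show ?thesis
      unfolding has_field_derivative_def by (rule has_derivative_eq_rhs) (simp add: fun_eq_iff)
  qed
  then have "(g \<bullet> (v - u)) * (1 - 0) \<le> \<phi> 1 - \<phi> 0"
    by (intro convex_on_imp_above_tangent[OF \<open>convex_on UNIV \<phi>\<close>]) auto
  then show ?thesis by (simp add: \<phi>_def)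
qed

context
  fixes F :: "'a::real_inner \<Rightarrow> real" and gradF :: "'a \<Rightarrow> 'a" and L :: real
  assumes F_convex: "convex_on UNIV F"
    and F_grad: "\<And>u. (F has_derivative (\<lambda>h. gradF u \<bullet> h)) (at u)"
    and grad_Lip: "\<And>u v. norm (gradF u - gradF v) \<le> L * norm (u - v)"
begin

lemma lipschitz_gradient_upper_bound:
  "F v \<le> F u + gradF u \<bullet> (v - u) + L * (norm (v - u))\<^sup>2"
proof -
  have "F v + gradF v \<bullet> (u - v) \<le> F u"
    by (rule convex_on_gradient_ineq[OF F_convex F_grad])
  moreover have "(gradF v - gradF u) \<bullet> (v - u) \<le> norm (gradF v - gradF u) * norm (v - u)"
    by (rule norm_cauchy_schwarz)
  moreover have "norm (gradF v - gradF u) * norm (v - u) \<le> L * (norm (v - u))\<^sup>2"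
    using mult_right_mono[OF grad_Lip[of v u] norm_ge_zero[of "v - u"]]
    by (simp add: power2_eq_square mult.assoc)
  ultimately show ?thesis
    by (simp add: inner_diff_left inner_diff_right)
qed

lemma lipschitz_gradient_cocoercive_half:
  assumes "L > 0"
  shows "F u - gradF u \<bullet> u + (norm (gradF v - gradF u))\<^sup>2 / (4 * L) \<le> F v - gradF u \<bullet> v"
proof -
  define g where "g = gradF v - gradF u"
  \<comment> \<open>test the gradient inequality at u against the gradient step of length 1/(2L) from v\<close>
  define w where "w = v - (1 / (2 * L)) *\<^sub>R g"
  have "F u + gradF u \<bullet> (w - u) \<le> F w"
    by (rule convex_on_gradient_ineq[OF F_convex F_grad])
  also have "F w \<le> F v + gradF v \<bullet> (w - v) + L * (norm (w - v))\<^sup>2"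
    by (rule lipschitz_gradient_upper_bound)
  finally have "F u + gradF u \<bullet> (w - u) \<le> F v + gradF v \<bullet> (w - v) + L * (norm (w - v))\<^sup>2" .
  moreover have "gradF v \<bullet> (w - v) - gradF u \<bullet> (w - v) = - (g \<bullet> g) / (2 * L)"
    by (simp add: w_def g_def inner_diff_left diff_divide_distrib)
  moreover have "L * (norm (w - v))\<^sup>2 = (g \<bullet> g) / (4 * L)"
    using assms by (simp add: w_def dot_square_norm power_mult_distrib power2_eq_square)
  moreover have "gradF u \<bullet> (w - u) = gradF u \<bullet> (w - v) + gradF u \<bullet> v - gradF u \<bullet> u"
    by (simp add: inner_diff_right)
  ultimately show ?thesis
    unfolding g_def[symmetric] power2_norm_eq_inner by (simp add: field_simps)
qed

lemma lipschitz_gradient_cocoercive: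
  assumes "L > 0"
  shows "(norm (gradF v - gradF u))\<^sup>2 / (2 * L) \<le> (gradF v - gradF u) \<bullet> (v - u)"
  using lipschitz_gradient_cocoercive_half[OF assms, of u v]
    lipschitz_gradient_cocoercive_half[OF assms, of v u]
  by (simp add: norm_minus_commute inner_diff_left inner_diff_right field_simps)

end

lemma ereal_diff_add_eq:
  assumes "e \<noteq> -\<infinity>"
  shows "e - ereal a + ereal b = e + ereal (b - a)"
  using assms by (cases e) auto

lemma le_of_forall_le_add_mult:
  fixes a b K :: real
  assumes "\<And>t. 0 < t \<Longrightarrow> t \<le> 1 \<Longrightarrow> a \<le> b + t * K"
  shows "a \<le> b"
proof (rule field_le_epsilon)
  fix e :: real assume "0 < e"
  define t where "t = min 1 (e / (\<bar>K\<bar> + 1))"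
  have t: "0 < t" "t \<le> 1"
    using \<open>0 < e\<close> by (auto simp: t_def)
  have "t * K \<le> t * (\<bar>K\<bar> + 1)"
    using t by (intro mult_left_mono) auto
  also have "\<dots> \<le> e"
    by (simp add: t_def min_def field_simps add_pos_nonneg)
  finally show "a \<le> b + e"
    using assms[OF t] by linarith
qed

lemma convex_efun_minimizer_subgradient:
  fixes G :: "'a::real_vector \<Rightarrow> ereal" and \<phi> :: "'a \<Rightarrow> real"
  assumes G_convex: "convex_efun G" and G_proper: "proper_fun G"
    and Gu: "G u = ereal gu"
    and min: "\<And>w. G u + ereal (\<phi> u) \<le> G w + ereal (\<phi> w)"
    and quad: "\<And>t. 0 < t \<Longrightarrow> t \<le> 1 \<Longrightarrow> \<phi> (u + t *\<^sub>R (v - u)) \<le> \<phi> u + t * p + t\<^sup>2 * K"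
  shows "ereal (gu - p) \<le> G v"
proof (cases "G v")
  case (real gv)
  have "gu - p \<le> gv"
  proof (rule le_of_forall_le_add_mult)
    fix t :: real assume t: "0 < t" "t \<le> 1"
    define w where "w = u + t *\<^sub>R (v - u)"
    have "w = (1 - t) *\<^sub>R u + t *\<^sub>R v"
      by (simp add: w_def algebra_simps)
    then have "G w \<le> ereal (1 - t) * G u + ereal t * G v"
      using G_convex t unfolding convex_efun_def by simp
    then have "G w \<le> ereal ((1 - t) * gu + t * gv)"
      using Gu real by simp
    moreover have "G w \<noteq> -\<infinity>"
      using G_proper by (simp add: proper_fun_def)
    ultimately obtain gw where gw: "G w = ereal gw" "gw \<le> (1 - t) * gu + t * gv"
      by (cases "G w") auto
    have "gu + \<phi> u \<le> gw + \<phi> w"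
      using min[of w] Gu gw by simp
    with gw(2) quad[OF t] have "t * gu \<le> t * (gv + p + t * K)"
      by (simp add: w_def algebra_simps power2_eq_square)
    with t show "gu - p \<le> gv + t * K"
      by (simp add: mult_le_cancel_left_pos)
  qed
  with real show ?thesis by simp
next
  case MInf
  with G_proper show ?thesis by (simp add: proper_fun_def)
qed simp

lemma lsc_fun_add_continuous:
  fixes F :: "'a::topological_space \<Rightarrow> real"
  assumes F: "continuous_on UNIV F" and G: "lsc_fun G"
  shows "lsc_fun (\<lambda>u. ereal (F u) + G u)"
  unfolding lsc_fun_def
proof (intro allI impI)
  fix p :: 'a and X :: "nat \<Rightarrow> 'a" assume X: "X \<longlonglongrightarrow> p"
  have "(\<lambda>k. ereal (F (X k))) \<longlonglongrightarrow> ereal (F p)"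
    using continuous_on_tendsto_compose[OF F X] by (simp add: tendsto_ereal)
  then have "liminf (\<lambda>k. ereal (F (X k)) + G (X k)) = ereal (F p) + liminf (\<lambda>k. G (X k))"
    by (rule ereal_liminf_lim_add) simp
  moreover have "G p \<le> liminf (\<lambda>k. G (X k))"
    using G X by (simp add: lsc_fun_def)
  ultimately show "ereal (F p) + G p \<le> liminf (\<lambda>k. ereal (F (X k)) + G (X k))"
    by (simp add: add_left_mono)
qed

lemma lsc_coercive_efun_has_minimizer:
  fixes H :: "'a::{heine_borel,real_normed_vector} \<Rightarrow> ereal"
  assumes lsc: "lsc_fun H" and coercive: "coercive_efun H" and finite: "H x0 \<noteq> \<infinity>"
  shows "\<exists>u. \<forall>v. H u \<le> H v"
proof -
  obtain M where M: "H x0 < ereal M"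
    using ereal_dense2[of "H x0" \<infinity>] finite by auto
  obtain R where R: "\<And>x. R \<le> norm x \<Longrightarrow> ereal M \<le> H x"
    using coercive unfolding coercive_efun_def by blast
  define S where "S = cball (0::'a) R"
  have "x0 \<in> S"
    using M R[of x0] by (force simp: S_def)
  then obtain m where m: "\<And>n. m n \<in> H ` S" "m \<longlonglongrightarrow> Inf (H ` S)"
    using Inf_as_limit[of "H ` S"] by blast
  have "\<forall>n. \<exists>X. X \<in> S \<and> H X = m n"
    using m(1) by (metis imageE)
  then obtain X where X: "\<And>n. X n \<in> S" "\<And>n. H (X n) = m n"
    by metis
  have "seq_compact S"
    unfolding S_def by (rule compact_imp_seq_compact) simp
  then obtain p \<rho> where "strict_mono \<rho>" and p: "(X \<circ> \<rho>) \<longlonglongrightarrow> p"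
    using X(1) by (meson seq_compactE)
  have "H p \<le> liminf (H \<circ> X \<circ> \<rho>)"
    using lsc p by (simp add: lsc_fun_def o_def)
  also have "liminf (H \<circ> X \<circ> \<rho>) = Inf (H ` S)"
    using X(2) LIMSEQ_subseq_LIMSEQ[OF m(2) \<open>strict_mono \<rho>\<close>]
    by (intro lim_imp_Liminf) (simp_all add: o_def)
  finally have p_min: "H p \<le> Inf (H ` S)" .
  have "H p \<le> H v" for v
  proof (cases "v \<in> S")
    case True
    then show ?thesis using p_min by (meson INF_lower order_trans)
  next
    case False
    then have "ereal M \<le> H v" by (intro R) (simp add: S_def)
    moreover have "H p \<le> H x0" using p_min \<open>x0 \<in> S\<close> by (meson INF_lower order_trans)
    ultimately show ?thesis using M by order
  qed
  then show ?thesis by blast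
qed

lemma lsc_fun_subgradient_limit:
  fixes G :: "'a::real_inner \<Rightarrow> ereal"
  assumes lsc: "lsc_fun G" and z: "z \<longlonglongrightarrow> zb" and p: "p \<longlonglongrightarrow> pb"
    and Gv: "G v = ereal gv"
    and sub: "eventually (\<lambda>k. G (z k) \<le> ereal (gv - p k \<bullet> (v - z k))) sequentially"
  shows "G zb \<le> ereal (gv - pb \<bullet> (v - zb))"
proof -
  have "G zb \<le> liminf (\<lambda>k. G (z k))"
    using lsc z by (simp add: lsc_fun_def)
  also have "\<dots> \<le> liminf (\<lambda>k. ereal (gv - p k \<bullet> (v - z k)))"
    using sub by (rule Liminf_mono)
  also have "\<dots> = ereal (gv - pb \<bullet> (v - zb))"
  proof (rule lim_imp_Liminf)
    show "(\<lambda>k. ereal (gv - p k \<bullet> (v - z k))) \<longlonglongrightarrow> ereal (gv - pb \<bullet> (v - zb))"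
      unfolding lim_ereal by (intro tendsto_intros z p)
  qed simp
  finally show ?thesis .
qed

lemma convex_efun_mean_le:
  fixes G :: "'a::real_vector \<Rightarrow> ereal"
  assumes G_convex: "convex_efun G" and n: "1 \<le> n"
    and Gz: "\<And>t. t \<in> {1..n} \<Longrightarrow> G (z t) = ereal (g t)"
  shows "G ((1 / real n) *\<^sub>R (\<Sum>t = 1..n. z t)) \<le> ereal ((\<Sum>t = 1..n. g t) / real n)"
  using n Gz
proof (induction n rule: nat_induct_at_least)
  case base
  then show ?case by simp
next
  case (Suc n)
  define \<tau> where "\<tau> = 1 / real (Suc n)"
  have \<tau>: "0 \<le> \<tau>" "\<tau> \<le> 1" "1 - \<tau> = real n / real (Suc n)"
    by (auto simp: \<tau>_def field_simps)
  have "real n > 0"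
    using Suc.hyps by simp
  then have avg: "(1 - \<tau>) * (s / real n) = s / real (Suc n)" for s
    by (simp add: \<tau>(3))
  have "(1 / real (Suc n)) *\<^sub>R (\<Sum>t = 1..Suc n. z t)
      = (1 - \<tau>) *\<^sub>R ((1 / real n) *\<^sub>R (\<Sum>t = 1..n. z t)) + \<tau> *\<^sub>R z (Suc n)"
    using avg[of 1] by (simp add: \<tau>_def scaleR_right_distrib)
  moreover have "(\<Sum>t = 1..Suc n. g t) / real (Suc n)
      = (1 - \<tau>) * ((\<Sum>t = 1..n. g t) / real n) + \<tau> * g (Suc n)"
    unfolding avg by (simp add: \<tau>_def add_divide_distrib)
  moreover have "G ((1 - \<tau>) *\<^sub>R ((1 / real n) *\<^sub>R (\<Sum>t = 1..n. z t)) + \<tau> *\<^sub>R z (Suc n))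
      \<le> ereal (1 - \<tau>) * G ((1 / real n) *\<^sub>R (\<Sum>t = 1..n. z t)) + ereal \<tau> * G (z (Suc n))"
    using G_convex \<tau> unfolding convex_efun_def by blast
  moreover have "\<dots> \<le> ereal (1 - \<tau>) * ereal ((\<Sum>t = 1..n. g t) / real n) + ereal \<tau> * ereal (g (Suc n))"
    using Suc \<tau> by (intro add_mono ereal_mult_left_mono) auto
  ultimately show ?case by simp
qed

lemma Min_prefix_smallo_of_summable_squares:
  fixes a :: "nat \<Rightarrow> real"
  assumes nn: "\<And>t. a t \<ge> 0" and sm: "summable (\<lambda>t. (a t)^2)"
  shows "(\<lambda>N. Min (a ` {0..N})) \<in> o(\<lambda>N. 1 / sqrt (real N))"
proof (rule landau_o.smallI)
  fix \<epsilon> :: real assume e: "\<epsilon> > 0"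
  then have "\<epsilon>^2/2 > 0" by simp
  with sm obtain M where M: "\<And>m n. m \<ge> M \<Longrightarrow> norm (\<Sum>t = m..<n. (a t)^2) < \<epsilon>^2/2"
    unfolding summable_Cauchy by blast
  show "eventually (\<lambda>N. norm (Min (a ` {0..N})) \<le> \<epsilon> * norm (1 / sqrt (real N))) sequentially"
    unfolding eventually_sequentially
  proof (intro exI[of _ "max (2*M) 1"] allI impI)
    fix N :: nat assume NM: "max (2*M) 1 \<le> N"
    define f where "f = Min (a ` {0..N})"
    define m where "m = N div 2"
    have mM: "m \<ge> M" using NM unfolding m_def by linarith
    have f0: "f \<ge> 0" unfolding f_def using nn by (subst Min_ge_iff) auto
    have fle: "f \<le> a t" if "t \<le> N" for t unfolding f_def using that by (intro Min_le) auto
    have "(\<Sum>t = m..<Suc N. f^2) \<le> (\<Sum>t = m..<Suc N. (a t)^2)"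
    proof (intro sum_mono power_mono)
      fix t assume "t \<in> {m..<Suc N}"
      then show "f \<le> a t" by (intro fle) auto
    qed (use f0 in auto)
    also have "\<dots> < \<epsilon>^2/2"
    proof -
      have "(\<Sum>t = m..<Suc N. (a t)^2) \<ge> 0" by (intro sum_nonneg) auto
      then show ?thesis using M[OF mM, of "Suc N"] by simp
    qed
    finally have "real (Suc N - m) * f^2 < \<epsilon>^2/2" by simp
    moreover have "real N / 2 \<le> real (Suc N - m)" unfolding m_def by linarith
    ultimately have "real N / 2 * f^2 < \<epsilon>^2/2"
      by (meson f0 le_less_trans mult_right_mono zero_le_power2)
    then have "real N * f^2 < \<epsilon>^2" by simp
    then have "sqrt (real N * f^2) < sqrt (\<epsilon>^2)" by (rule real_sqrt_less_mono)
    then have "sqrt (real N) * f < \<epsilon>" using f0 e by (simp add: real_sqrt_mult)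
    moreover have "N > 0" using NM by simp
    ultimately have "f \<le> \<epsilon> / sqrt (real N)" by (simp add: pos_le_divide_eq mult.commute)
    then show "norm (Min (a ` {0..N})) \<le> \<epsilon> * norm (1 / sqrt (real N))"
      using f0 by (simp add: f_def)
  qed
qed

lemma fejer_scalar_ineq:
  fixes r aa ab ae bb be ee \<phi> :: real
  assumes r: "0 < r" "r \<le> 1"
    and monotone: "0 \<le> (1 - r) * (ab - bb) - be"
    and cocoercive: "(5 / (2 * r)) * ee \<le> ae"
    and ee: "0 \<le> ee"
    and objective: "\<phi> \<le> (1 - r) * (ab - bb) + (r / 5) * (aa - 2 * ab + bb)"
  shows "\<phi> + ((5 - 7 * r) / 10) * (aa - 2 * ab + bb)
    \<le> ((1 - r) / (8 * r)) * (((1 + r)\<^sup>2 * aa + 2 * (1 + r) * ae + ee)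
       - ((r - 1)\<^sup>2 * aa + ee + 4 * bb + 2 * (r - 1) * ae + 4 * (r - 1) * ab + 4 * be))"
proof -
  define k where "k = (1 - r) / (2 * r)"
  have "0 \<le> k" using r by (simp add: k_def)
  \<comment> \<open>the slack is k times the sum of the three nonnegative defects\<close>
  have "((1 - r) / (8 * r)) * (((1 + r)\<^sup>2 * aa + 2 * (1 + r) * ae + ee)
       - ((r - 1)\<^sup>2 * aa + ee + 4 * bb + 2 * (r - 1) * ae + 4 * (r - 1) * ab + 4 * be))
     - ((1 - r) * (ab - bb) + (r / 5) * (aa - 2 * ab + bb)) - ((5 - 7 * r) / 10) * (aa - 2 * ab + bb)
     = k * ((1 - r) * (ab - bb) - be) + k * (ae - (5 / (2 * r)) * ee) + k * (5 / (2 * r)) * ee"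
    using r by (simp add: k_def field_simps) (simp add: algebra_simps power2_eq_square)
  moreover have "0 \<le> k * ((1 - r) * (ab - bb) - be)"
    using \<open>0 \<le> k\<close> monotone by simp
  moreover have "0 \<le> k * (ae - (5 / (2 * r)) * ee)"
    using \<open>0 \<le> k\<close> cocoercive by simp
  moreover have "0 \<le> k * (5 / (2 * r)) * ee"
    using \<open>0 \<le> k\<close> ee r by simp
  ultimately show ?thesis
    using objective by linarith
qed

text \<open>With \<open>a = y - u\<close>, \<open>b = z - u\<close> and \<open>e = \<gamma> (\<nabla>F y - \<nabla>F u)\<close> for a minimizer \<open>u\<close>,
  the vectors \<open>(1 + r) a + e\<close> and \<open>(1 + r) a + e + 2 (b - a)\<close> are \<open>x\<^sup>t - x\<^sup>*\<close> and
  \<open>x\<^sup>t\<^sup>+\<^sup>1 - x\<^sup>*\<close>; the hypotheses are the monotonicity of \<open>\<partial>G\<close>, the cocoercivity of \<open>\<nabla>F\<close>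
  and the one-step bound on the objective.\<close>

lemma fejer_inner_ineq:
  fixes a b e :: "'a::real_inner" and r \<phi> :: real
  assumes r: "0 < r" "r \<le> 1"
    and monotone: "0 \<le> ((1 - r) *\<^sub>R (a - b) - e) \<bullet> b"
    and cocoercive: "(5 / (2 * r)) * (e \<bullet> e) \<le> e \<bullet> a"
    and objective: "\<phi> \<le> (1 - r) * ((a - b) \<bullet> b) + (r / 5) * ((a - b) \<bullet> (a - b))"
  shows "\<phi> + ((5 - 7 * r) / 10) * (norm (a - b))\<^sup>2
    \<le> ((1 - r) / (8 * r))
      * ((norm ((1 + r) *\<^sub>R a + e))\<^sup>2 - (norm ((1 + r) *\<^sub>R a + e + 2 *\<^sub>R (b - a)))\<^sup>2)"
proof -
  have h1: "(norm ((1 + r) *\<^sub>R a + e))\<^sup>2 = (1 + r)\<^sup>2 * (a \<bullet> a) + 2 * (1 + r) * (a \<bullet> e) + e \<bullet> e"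
    unfolding power2_norm_eq_inner
    by (simp add: inner_add_left inner_add_right algebra_simps power2_eq_square inner_commute)
  have h2: "(norm ((1 + r) *\<^sub>R a + e + 2 *\<^sub>R (b - a)))\<^sup>2
      = (r - 1)\<^sup>2 * (a \<bullet> a) + e \<bullet> e + 4 * (b \<bullet> b) + 2 * (r - 1) * (a \<bullet> e)
        + 4 * (r - 1) * (a \<bullet> b) + 4 * (b \<bullet> e)"
    unfolding power2_norm_eq_inner
    by (simp add: inner_add_left inner_add_right inner_diff_left inner_diff_right algebra_simps
        power2_eq_square inner_commute)
  have h3: "(norm (a - b))\<^sup>2 = a \<bullet> a - 2 * (a \<bullet> b) + b \<bullet> b"
    unfolding power2_norm_eq_inner
    by (simp add: inner_diff_left inner_diff_right algebra_simps inner_commute)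
  have "0 \<le> (1 - r) * (a \<bullet> b - b \<bullet> b) - b \<bullet> e"
    using monotone by (simp add: inner_diff_left inner_diff_right algebra_simps inner_commute)
  moreover have "(5 / (2 * r)) * (e \<bullet> e) \<le> a \<bullet> e"
    using cocoercive by (simp add: inner_commute)
  moreover have "\<phi> \<le> (1 - r) * (a \<bullet> b - b \<bullet> b) + (r / 5) * (a \<bullet> a - 2 * (a \<bullet> b) + b \<bullet> b)"
    using objective by (simp add: inner_diff_left inner_diff_right algebra_simps inner_commute)
  ultimately show ?thesis
    unfolding h1 h2 h3 by (intro fejer_scalar_ineq[OF r]) simp_all
qed

locale modified_PR =
  fixes F :: "'a::euclidean_space \<Rightarrow> real"
    and gradF :: "'a \<Rightarrow> 'a"
    and G :: "'a \<Rightarrow> ereal"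
    and L \<gamma> :: real
    and x y z :: "nat \<Rightarrow> 'a"
  assumes F_convex: "convex_on UNIV F"
    and F_grad: "\<And>u. (F has_derivative (\<lambda>h. gradF u \<bullet> h)) (at u)"
    and L_pos: "L > 0"
    and grad_Lip: "\<And>u v. norm (gradF u - gradF v) \<le> L * norm (u - v)"
    and G_proper: "proper_fun G"
    and G_lsc: "lsc_fun G"
    and G_convex: "convex_efun G"
    and coercive: "coercive_efun (\<lambda>u. ereal (F u) + G u)"
    and gamma_pos: "\<gamma> > 0"
    and gamma_small: "\<gamma> < 1 / (12 * L)"
    and y_step: "\<And>t w.
        F (y (Suc t)) + (5 * L / 2) * (norm (y (Suc t)))\<^sup>2
          + (1 / (2 * \<gamma>)) * (norm (y (Suc t) - x t))\<^sup>2
        \<le> F w + (5 * L / 2) * (norm w)\<^sup>2 + (1 / (2 * \<gamma>)) * (norm (w - x t))\<^sup>2"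
    and z_step: "\<And>t w.
        G (z (Suc t)) - ereal ((5 * L / 2) * (norm (z (Suc t)))\<^sup>2)
          + ereal ((1 / (2 * \<gamma>)) * (norm (2 *\<^sub>R y (Suc t) - x t - z (Suc t)))\<^sup>2)
        \<le> G w - ereal ((5 * L / 2) * (norm w)\<^sup>2)
          + ereal ((1 / (2 * \<gamma>)) * (norm (2 *\<^sub>R y (Suc t) - x t - w))\<^sup>2)"
    and x_step: "\<And>t. x (Suc t) = x t + 2 *\<^sub>R (z (Suc t) - y (Suc t))"
begin

definition r :: real where "r = 5 * L * \<gamma>"

text \<open>\<open>x_of\<close> recovers \<open>x\<^sup>t\<close> from \<open>y\<^sup>t\<^sup>+\<^sup>1\<close> (lemma \<open>x_eq_x_of_y\<close>); at a minimizer it is the point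
  \<open>x\<^sup>*\<close> towards which the \<open>x\<close>-iterates are Fejer monotone.\<close>

definition x_of :: "'a \<Rightarrow> 'a" where "x_of u = (1 + r) *\<^sub>R u + \<gamma> *\<^sub>R gradF u"

lemma r_pos: "0 < r" and r_le: "r \<le> 5 / 12"
proof -
  show "0 < r" using L_pos gamma_pos by (simp add: r_def)
  have "\<gamma> * (12 * L) < 1" using gamma_small L_pos by (simp add: field_simps)
  then show "r \<le> 5 / 12" by (simp add: r_def algebra_simps)
qed

lemma G_not_MInf: "G u \<noteq> -\<infinity>"
  using G_proper by (simp add: proper_fun_def)

lemma x_eq_x_of_y: "x t = x_of (y (Suc t))"
proof -
  define \<psi> where "\<psi> w = F w + (5 * L / 2) * (w \<bullet> w) + (1 / (2 * \<gamma>)) * ((w - x t) \<bullet> (w - x t))" for w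
  define g where "g = gradF (y (Suc t)) + (5 * L) *\<^sub>R y (Suc t) + (1 / \<gamma>) *\<^sub>R (y (Suc t) - x t)"
  have "(\<psi> has_derivative (\<lambda>h. g \<bullet> h)) (at (y (Suc t)))"
    unfolding \<psi>_def g_def
    by (rule has_derivative_eq_rhs)
      (use gamma_pos in \<open>auto intro!: derivative_eq_intros F_grad
        simp: fun_eq_iff inner_add_left inner_diff_left inner_commute algebra_simps\<close>)
  moreover have "\<forall>w\<in>UNIV. \<psi> (y (Suc t)) \<le> \<psi> w"
    using y_step[of t] by (simp add: \<psi>_def dot_square_norm)
  ultimately have "(\<lambda>h. g \<bullet> h) = (\<lambda>h. 0)"
    by (intro differential_zero_maxmin[of "y (Suc t)" UNIV]) auto
  then have "g \<bullet> g = 0" by metis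
  then have "\<gamma> *\<^sub>R g = 0" by simp
  then show ?thesis
    using gamma_pos by (auto simp: g_def x_of_def r_def algebra_simps)
qed

text \<open>\<open>real_of_ereal\<close> sends \<open>\<plusminus>\<infinity>\<close> to \<open>0\<close>; \<open>g_z\<close> is only used at positive indices,
  where \<open>G (z t)\<close> is finite.\<close>

definition g_z :: "nat \<Rightarrow> real" where "g_z t = real_of_ereal (G (z t))"

lemma G_z_eq: "G (z (Suc t)) = ereal (g_z (Suc t))"
proof (cases "G (z (Suc t))")
  case PInf
  obtain w where "G w \<noteq> \<infinity>" using G_proper by (auto simp: proper_fun_def)
  with z_step[of t w] PInf G_not_MInf[of w] show ?thesis
    by (cases "G w") simp_all
qed (use G_not_MInf in \<open>auto simp: g_z_def\<close>)

lemma z_subgradient: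
  "ereal (g_z (Suc t) + (1 / \<gamma>) * (((1 + r) *\<^sub>R z (Suc t) - x (Suc t)) \<bullet> (v - z (Suc t)))) \<le> G v"
proof -
  define Z where "Z = z (Suc t)"
  define D where "D = 2 *\<^sub>R y (Suc t) - x t"
  define \<phi> where "\<phi> w = (1 / (2 * \<gamma>)) * (norm (D - w))\<^sup>2 - (5 * L / 2) * (norm w)\<^sup>2" for w
  have min: "G Z + ereal (\<phi> Z) \<le> G w + ereal (\<phi> w)" for w
    using z_step[of t w] by (simp add: Z_def D_def \<phi>_def ereal_diff_add_eq G_not_MInf)
  define p where "p = - (1 / \<gamma>) * ((D - Z + r *\<^sub>R Z) \<bullet> (v - Z))"
  have quad: "\<phi> (Z + s *\<^sub>R (v - Z)) \<le> \<phi> Z + s * p + s\<^sup>2 * ((norm (v - Z))\<^sup>2 / (2 * \<gamma>))" for s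
  proof -
    have "\<phi> (Z + s *\<^sub>R (v - Z)) = \<phi> Z + s * p + s\<^sup>2 * ((norm (v - Z))\<^sup>2 / (2 * \<gamma>))
        - (5 * L / 2) * s\<^sup>2 * (norm (v - Z))\<^sup>2"
      using gamma_pos unfolding \<phi>_def p_def r_def power2_norm_eq_inner
      by (simp add: inner_add_left inner_add_right inner_diff_left inner_diff_right inner_commute
          field_simps power2_eq_square)
    then show ?thesis using L_pos by simp
  qed
  have "ereal (g_z (Suc t) - p) \<le> G v"
    using convex_efun_minimizer_subgradient[OF G_convex G_proper _ min quad] G_z_eq
    by (simp add: Z_def)
  moreover have "D - Z + r *\<^sub>R Z = (1 + r) *\<^sub>R z (Suc t) - x (Suc t)"
    by (simp add: D_def Z_def x_step algebra_simps scaleR_2)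
  ultimately show ?thesis
    by (simp add: p_def Z_def)
qed

lemma minimizer_subgradient:
  assumes min: "\<And>w. ereal (F u) + G u \<le> ereal (F w) + G w" and Gu: "G u = ereal gu"
  shows "ereal (gu - gradF u \<bullet> (v - u)) \<le> G v"
proof (rule convex_efun_minimizer_subgradient[OF G_convex G_proper Gu])
  show "G u + ereal (F u) \<le> G w + ereal (F w)" for w
    using min[of w] by (simp add: add.commute)
  show "F (u + s *\<^sub>R (v - u)) \<le> F u + s * (gradF u \<bullet> (v - u)) + s\<^sup>2 * (L * (norm (v - u))\<^sup>2)" for s
    using lipschitz_gradient_upper_bound[OF F_convex F_grad grad_Lip, of "u + s *\<^sub>R (v - u)" u]
    by (simp add: power_mult_distrib mult.left_commute)
qed

lemma minimizer_exists: "\<exists>u. \<forall>w. ereal (F u) + G u \<le> ereal (F w) + G w"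
proof (rule lsc_coercive_efun_has_minimizer[OF _ coercive])
  have "continuous_on UNIV F"
    using has_derivative_continuous[OF F_grad] by (simp add: continuous_at_imp_continuous_on)
  then show "lsc_fun (\<lambda>u. ereal (F u) + G u)"
    by (rule lsc_fun_add_continuous[OF _ G_lsc])
  show "ereal (F (z 1)) + G (z 1) \<noteq> \<infinity>"
    using G_z_eq[of 0] by simp
qed

lemma minimizer_finite:
  assumes "\<And>w. ereal (F u) + G u \<le> ereal (F w) + G w"
  obtains gu where "G u = ereal gu"
  using assms[of "z 1"] G_z_eq[of 0] G_not_MInf[of u] by (cases "G u") auto

lemma subgradient_at_z_eq:
  "(1 + r) *\<^sub>R z (Suc t) - x (Suc t)
    = (1 - r) *\<^sub>R (y (Suc t) - z (Suc t)) - \<gamma> *\<^sub>R gradF (y (Suc t))"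
  by (simp add: x_step x_eq_x_of_y[of t] x_of_def algebra_simps scaleR_2)

lemma monotone_step:
  assumes min: "\<And>w. ereal (F u) + G u \<le> ereal (F w) + G w" and Gu: "G u = ereal gu"
  shows "0 \<le> ((1 - r) *\<^sub>R (y (Suc t) - z (Suc t)) - \<gamma> *\<^sub>R (gradF (y (Suc t)) - gradF u))
    \<bullet> (z (Suc t) - u)"
proof -
  define S b where "S = (1 + r) *\<^sub>R z (Suc t) - x (Suc t)" and "b = z (Suc t) - u"
  have "g_z (Suc t) - (1 / \<gamma>) * (S \<bullet> b) \<le> gu"
    using z_subgradient[of t u] Gu by (simp add: S_def b_def inner_diff_right diff_divide_distrib)
  moreover have "gu - gradF u \<bullet> b \<le> g_z (Suc t)"
    using minimizer_subgradient[OF min Gu, of "z (Suc t)"] G_z_eq[of t] by (simp add: b_def)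
  ultimately have "0 \<le> \<gamma> * ((1 / \<gamma>) * (S \<bullet> b) + gradF u \<bullet> b)"
    using gamma_pos by simp
  then have "0 \<le> (S + \<gamma> *\<^sub>R gradF u) \<bullet> b"
    using gamma_pos by (simp add: inner_add_left algebra_simps)
  moreover have "S + \<gamma> *\<^sub>R gradF u
      = (1 - r) *\<^sub>R (y (Suc t) - z (Suc t)) - \<gamma> *\<^sub>R (gradF (y (Suc t)) - gradF u)"
    unfolding S_def subgradient_at_z_eq by (simp add: algebra_simps)
  ultimately show ?thesis
    by (simp add: b_def)
qed

lemma objective_step_bound:
  assumes Gu: "G u = ereal gu"
  shows "\<gamma> * (F (z (Suc t)) + g_z (Suc t) - F u - gu)
    \<le> (1 - r) * ((y (Suc t) - z (Suc t)) \<bullet> (z (Suc t) - u)) + (r / 5) * (norm (y (Suc t) - z (Suc t)))\<^sup>2"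
proof -
  define Y Z where "Y = y (Suc t)" and "Z = z (Suc t)"
  define S where "S = (1 + r) *\<^sub>R Z - x (Suc t)"
  have "g_z (Suc t) - (1 / \<gamma>) * (S \<bullet> (Z - u)) \<le> gu"
    using z_subgradient[of t u] Gu by (simp add: S_def Z_def inner_diff_right diff_divide_distrib)
  moreover have "F Y + gradF Y \<bullet> (u - Y) \<le> F u"
    by (rule convex_on_gradient_ineq[OF F_convex F_grad])
  moreover have "F Z \<le> F Y + gradF Y \<bullet> (Z - Y) + L * (norm (Z - Y))\<^sup>2"
    by (rule lipschitz_gradient_upper_bound[OF F_convex F_grad grad_Lip])
  moreover have "gradF Y \<bullet> (Z - Y) - gradF Y \<bullet> (u - Y) = gradF Y \<bullet> (Z - u)"
    by (simp add: inner_diff_right)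
  ultimately have "F Z + g_z (Suc t) - F u - gu
      \<le> gradF Y \<bullet> (Z - u) + (1 / \<gamma>) * (S \<bullet> (Z - u)) + L * (norm (Z - Y))\<^sup>2"
    by linarith
  from mult_left_mono[OF this, of \<gamma>]
  have "\<gamma> * (F Z + g_z (Suc t) - F u - gu)
      \<le> (\<gamma> *\<^sub>R gradF Y + S) \<bullet> (Z - u) + (\<gamma> * L) * (norm (Z - Y))\<^sup>2"
    using gamma_pos by (simp add: inner_add_left algebra_simps)
  also have "\<gamma> *\<^sub>R gradF Y + S = (1 - r) *\<^sub>R (Y - Z)"
    by (simp add: S_def Y_def Z_def subgradient_at_z_eq)
  also have "\<gamma> * L = r / 5"
    by (simp add: r_def)
  also have "(norm (Z - Y))\<^sup>2 = (norm (Y - Z))\<^sup>2"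
    by (simp add: norm_minus_commute)
  finally show ?thesis by (simp add: Y_def Z_def)
qed

lemma scaled_gradient_cocoercive:
  fixes u v :: 'a
  defines "e \<equiv> \<gamma> *\<^sub>R (gradF v - gradF u)"
  shows "(5 / (2 * r)) * (e \<bullet> e) \<le> e \<bullet> (v - u)"
proof -
  have "e \<bullet> e = \<gamma>\<^sup>2 * (norm (gradF v - gradF u))\<^sup>2"
    unfolding e_def inner_scaleR_left inner_scaleR_right power2_norm_eq_inner
    by (simp add: power2_eq_square)
  then have "(5 / (2 * r)) * (e \<bullet> e) = \<gamma> * ((norm (gradF v - gradF u))\<^sup>2 / (2 * L))"
    using gamma_pos L_pos by (simp add: r_def power2_eq_square field_simps)
  also have "\<dots> \<le> \<gamma> * ((gradF v - gradF u) \<bullet> (v - u))"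
    using lipschitz_gradient_cocoercive[OF F_convex F_grad grad_Lip L_pos] gamma_pos
    by (intro mult_left_mono) auto
  finally show ?thesis by (simp add: e_def)
qed

lemma one_step_estimate:
  assumes min: "\<And>w. ereal (F u) + G u \<le> ereal (F w) + G w" and Gu: "G u = ereal gu"
  shows "\<gamma> * (F (z (Suc t)) + g_z (Suc t) - F u - gu)
           + ((5 - 7 * r) / 10) * (norm (y (Suc t) - z (Suc t)))\<^sup>2
         \<le> ((1 - r) / (8 * r))
           * ((norm (x t - x_of u))\<^sup>2 - (norm (x (Suc t) - x_of u))\<^sup>2)"
proof -
  define a b e where "a = y (Suc t) - u" and "b = z (Suc t) - u"
    and "e = \<gamma> *\<^sub>R (gradF (y (Suc t)) - gradF u)"
  have ab: "a - b = y (Suc t) - z (Suc t)"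
    by (simp add: a_def b_def)
  have "0 \<le> ((1 - r) *\<^sub>R (a - b) - e) \<bullet> b"
    unfolding ab using monotone_step[OF min Gu, of t] by (simp add: b_def e_def)
  moreover have "\<gamma> * (F (z (Suc t)) + g_z (Suc t) - F u - gu)
      \<le> (1 - r) * ((a - b) \<bullet> b) + (r / 5) * ((a - b) \<bullet> (a - b))"
    unfolding ab using objective_step_bound[OF Gu, of t] by (simp add: b_def dot_square_norm)
  moreover have "(5 / (2 * r)) * (e \<bullet> e) \<le> e \<bullet> a"
    unfolding a_def e_def by (rule scaled_gradient_cocoercive)
  moreover have "x t - x_of u = (1 + r) *\<^sub>R a + e"
    by (simp add: x_eq_x_of_y x_of_def a_def e_def algebra_simps)
  moreover have "x (Suc t) - x_of u = (1 + r) *\<^sub>R a + e + 2 *\<^sub>R (b - a)"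
    using \<open>x t - x_of u = _\<close> by (simp add: x_step a_def b_def algebra_simps)
  ultimately show ?thesis
    using fejer_inner_ineq[OF r_pos, of a b e] r_le by (simp add: ab)
qed

lemma dx_sq_le_fejer_decrease:
  assumes min: "\<And>w. ereal (F u) + G u \<le> ereal (F w) + G w" and Gu: "G u = ereal gu"
  shows "(norm (x (Suc t) - x t))\<^sup>2
    \<le> (5 * (1 - r) / (r * (5 - 7 * r))) * ((norm (x t - x_of u))\<^sup>2 - (norm (x (Suc t) - x_of u))\<^sup>2)"
proof -
  define D where "D = (norm (x t - x_of u))\<^sup>2 - (norm (x (Suc t) - x_of u))\<^sup>2"
  have "0 \<le> \<gamma> * (F (z (Suc t)) + g_z (Suc t) - F u - gu)"
    using min[of "z (Suc t)"] Gu G_z_eq[of t] gamma_pos by simp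
  with one_step_estimate[OF min Gu, of t]
  have "((5 - 7 * r) / 10) * (norm (y (Suc t) - z (Suc t)))\<^sup>2 \<le> ((1 - r) / (8 * r)) * D"
    unfolding D_def by linarith
  moreover have "norm (x (Suc t) - x t) = 2 * norm (y (Suc t) - z (Suc t))"
    by (simp add: x_step norm_minus_commute)
  ultimately show ?thesis
    using r_pos r_le unfolding D_def[symmetric] by (simp add: field_simps power2_eq_square)
qed

lemma summable_dx_sq: "summable (\<lambda>t. (norm (x (Suc t) - x t))\<^sup>2)"
proof -
  obtain u where min: "\<And>w. ereal (F u) + G u \<le> ereal (F w) + G w"
    using minimizer_exists by blast
  then obtain gu where Gu: "G u = ereal gu" by (rule minimizer_finite)
  define K where "K = 5 * (1 - r) / (r * (5 - 7 * r))"
  have "K \<ge> 0" using r_pos r_le by (simp add: K_def)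
  show ?thesis
  proof (rule summableI_nonneg_bounded)
    fix n
    have "(\<Sum>t<n. (norm (x (Suc t) - x t))\<^sup>2)
        \<le> (\<Sum>t<n. K * ((norm (x t - x_of u))\<^sup>2 - (norm (x (Suc t) - x_of u))\<^sup>2))"
      unfolding K_def by (intro sum_mono dx_sq_le_fejer_decrease[OF min Gu])
    also have "\<dots> = K * ((norm (x 0 - x_of u))\<^sup>2 - (norm (x n - x_of u))\<^sup>2)"
      using sum_lessThan_telescope'[of "\<lambda>t. (norm (x t - x_of u))\<^sup>2" n]
      by (simp add: sum_distrib_left[symmetric])
    also have "\<dots> \<le> K * (norm (x 0 - x_of u))\<^sup>2"
      using \<open>K \<ge> 0\<close> by (simp add: mult_left_mono)
    finally show "(\<Sum>t<n. (norm (x (Suc t) - x t))\<^sup>2) \<le> K * (norm (x 0 - x_of u))\<^sup>2" .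
  qed simp
qed

lemma dx_tendsto_zero: "(\<lambda>t. x (Suc t) - x t) \<longlonglongrightarrow> 0"
proof -
  have "(\<lambda>t. sqrt ((norm (x (Suc t) - x t))\<^sup>2)) \<longlonglongrightarrow> sqrt 0"
    by (intro tendsto_intros summable_LIMSEQ_zero[OF summable_dx_sq])
  then show ?thesis
    by (simp add: tendsto_norm_zero_iff)
qed

lemma z_minus_y_tendsto_zero: "(\<lambda>t. z t - y t) \<longlonglongrightarrow> 0"
proof -
  have "(\<lambda>t. (1 / 2) *\<^sub>R (x (Suc t) - x t)) \<longlonglongrightarrow> (1 / 2) *\<^sub>R 0"
    by (intro tendsto_intros dx_tendsto_zero)
  then have "(\<lambda>t. z (Suc t) - y (Suc t)) \<longlonglongrightarrow> 0"
    by (simp add: x_step)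
  then show ?thesis
    by (rule LIMSEQ_imp_Suc)
qed

lemma x_minus_x_of_y_tendsto_zero: "(\<lambda>t. x t - x_of (y t)) \<longlonglongrightarrow> 0"
proof -
  have "(\<lambda>t. x (Suc t) - x_of (y (Suc t))) \<longlonglongrightarrow> 0"
    using dx_tendsto_zero by (simp add: x_eq_x_of_y[symmetric])
  then show ?thesis
    by (rule LIMSEQ_imp_Suc)
qed

lemma x_of_continuous: "continuous_on UNIV x_of"
proof -
  have "L-lipschitz_on UNIV gradF"
    using grad_Lip L_pos by (intro lipschitz_onI) (auto simp: dist_norm)
  then show ?thesis
    unfolding x_of_def by (intro continuous_intros lipschitz_on_continuous_on)
qed

lemma cluster_point_eqs:
  assumes \<rho>: "strict_mono \<rho>"
    and lim_y: "(\<lambda>k. y (\<rho> k)) \<longlonglongrightarrow> yb"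
    and lim_z: "(\<lambda>k. z (\<rho> k)) \<longlonglongrightarrow> zb"
    and lim_x: "(\<lambda>k. x (\<rho> k)) \<longlonglongrightarrow> xb"
  shows "yb = zb" and "xb = x_of zb"
proof -
  have "(\<lambda>k. z (\<rho> k) - y (\<rho> k)) \<longlonglongrightarrow> 0"
    using LIMSEQ_subseq_LIMSEQ[OF z_minus_y_tendsto_zero \<rho>] by (simp add: o_def)
  moreover have "(\<lambda>k. z (\<rho> k) - y (\<rho> k)) \<longlonglongrightarrow> zb - yb"
    by (intro tendsto_intros lim_y lim_z)
  ultimately show "yb = zb"
    using LIMSEQ_unique by fastforce
  have "(\<lambda>k. x (\<rho> k) - x_of (y (\<rho> k))) \<longlonglongrightarrow> 0"
    using LIMSEQ_subseq_LIMSEQ[OF x_minus_x_of_y_tendsto_zero \<rho>] by (simp add: o_def)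
  moreover have "(\<lambda>k. x_of (y (\<rho> k))) \<longlonglongrightarrow> x_of yb"
    using continuous_on_tendsto_compose[OF x_of_continuous lim_y] by simp
  then have "(\<lambda>k. x (\<rho> k) - x_of (y (\<rho> k))) \<longlonglongrightarrow> xb - x_of yb"
    by (intro tendsto_intros lim_x)
  ultimately show "xb = x_of zb"
    using LIMSEQ_unique \<open>yb = zb\<close> by fastforce
qed

lemma cluster_point_minimizer:
  assumes \<rho>: "strict_mono \<rho>"
    and lim_z: "(\<lambda>k. z (\<rho> k)) \<longlonglongrightarrow> zb"
    and lim_x: "(\<lambda>k. x (\<rho> k)) \<longlonglongrightarrow> x_of zb"
  shows "ereal (F zb) + G zb \<le> ereal (F w) + G w"
proof (cases "G w")
  case (real gw)
  define p where "p k = (1 / \<gamma>) *\<^sub>R ((1 + r) *\<^sub>R z (\<rho> k) - x (\<rho> k))" for k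
  have "p \<longlonglongrightarrow> (1 / \<gamma>) *\<^sub>R ((1 + r) *\<^sub>R zb - x_of zb)"
    unfolding p_def by (intro tendsto_intros lim_z lim_x)
  moreover have "(1 / \<gamma>) *\<^sub>R ((1 + r) *\<^sub>R zb - x_of zb) = - gradF zb"
    using gamma_pos by (simp add: x_of_def)
  ultimately have lim_p: "p \<longlonglongrightarrow> - gradF zb"
    by simp
  have "G (z (\<rho> k)) \<le> ereal (gw - p k \<bullet> (w - z (\<rho> k)))" if "1 \<le> k" for k
  proof -
    have "Suc (\<rho> k - 1) = \<rho> k"
      using seq_suble[OF \<rho>, of k] that by simp
    then show ?thesis
      using z_subgradient[of "\<rho> k - 1" w] G_z_eq[of "\<rho> k - 1"] real
      by (simp add: p_def algebra_simps)
  qed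
  then have "G zb \<le> ereal (gw - (- gradF zb) \<bullet> (w - zb))"
    by (intro lsc_fun_subgradient_limit[OF G_lsc lim_z lim_p real])
      (auto simp: eventually_sequentially)
  moreover have "F zb + gradF zb \<bullet> (w - zb) \<le> F w"
    by (rule convex_on_gradient_ineq[OF F_convex F_grad])
  ultimately show ?thesis
    using real by (cases "G zb") auto
qed (use G_not_MInf in auto)

lemma objective_gap_sum_le:
  assumes min: "\<And>w. ereal (F u) + G u \<le> ereal (F w) + G w" and Gu: "G u = ereal gu"
  shows "\<gamma> * (\<Sum>t<N. F (z (Suc t)) + g_z (Suc t) - F u - gu)
    \<le> ((1 - r) / (8 * r)) * (norm (x 0 - x_of u))\<^sup>2"
proof -
  define k where "k = (1 - r) / (8 * r)"
  have "k \<ge> 0" using r_pos r_le by (simp add: k_def)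
  have step: "\<gamma> * (F (z (Suc t)) + g_z (Suc t) - F u - gu)
      \<le> k * ((norm (x t - x_of u))\<^sup>2 - (norm (x (Suc t) - x_of u))\<^sup>2)" for t
  proof -
    have "0 \<le> ((5 - 7 * r) / 10) * (norm (y (Suc t) - z (Suc t)))\<^sup>2"
      using r_le by simp
    with one_step_estimate[OF min Gu, of t] show ?thesis
      unfolding k_def by linarith
  qed
  have "\<gamma> * (\<Sum>t<N. F (z (Suc t)) + g_z (Suc t) - F u - gu)
      \<le> (\<Sum>t<N. k * ((norm (x t - x_of u))\<^sup>2 - (norm (x (Suc t) - x_of u))\<^sup>2))"
    unfolding sum_distrib_left by (intro sum_mono step)
  also have "\<dots> = k * ((norm (x 0 - x_of u))\<^sup>2 - (norm (x N - x_of u))\<^sup>2)"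
    using sum_lessThan_telescope'[of "\<lambda>t. (norm (x t - x_of u))\<^sup>2" N]
    by (simp add: sum_distrib_left[symmetric])
  also have "\<dots> \<le> k * (norm (x 0 - x_of u))\<^sup>2"
    using \<open>k \<ge> 0\<close> by (simp add: mult_left_mono)
  finally show ?thesis by (simp add: k_def)
qed

lemma ergodic_objective_rate:
  assumes min: "\<And>w. ereal (F u) + G u \<le> ereal (F w) + G w" and Gu: "G u = ereal gu"
    and N: "1 \<le> N"
  defines "zN \<equiv> (1 / real N) *\<^sub>R (\<Sum>t = 1..N. z t)"
  shows "ereal (F zN) + G zN - ereal (F u) - G u
    \<le> ereal (1 / (40 * \<gamma> * real N * L) * (1 / \<gamma> - 5 * L) * (norm (x 0 - x_of u))\<^sup>2)"
proof -
  have "G zN \<le> ereal ((\<Sum>t = 1..N. g_z t) / real N)"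
    unfolding zN_def
  proof (rule convex_efun_mean_le[OF G_convex N])
    show "G (z t) = ereal (g_z t)" if "t \<in> {1..N}" for t
      using G_z_eq[of "t - 1"] that by simp
  qed
  then obtain gN where gN: "G zN = ereal gN" "gN \<le> (\<Sum>t = 1..N. g_z t) / real N"
    using G_not_MInf[of zN] by (cases "G zN") auto
  have "F zN \<le> (\<Sum>t = 1..N. (1 / real N) * F (z t))"
    using convex_on_sum[OF _ _ F_convex, of "{1..N}" "\<lambda>_. 1 / real N" z] N
    by (simp add: zN_def scaleR_sum_right)
  with gN(2) have "F zN + gN - F u - gu \<le> (\<Sum>t = 1..N. F (z t) + g_z t - F u - gu) / real N"
    using N by (simp add: sum.distrib sum_subtractf sum_divide_distrib[symmetric] field_simps)
  also have "\<dots> = (\<Sum>t<N. F (z (Suc t)) + g_z (Suc t) - F u - gu) / real N"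
    by (simp add: sum.atLeast1_atMost_eq)
  also have "\<dots> \<le> ((1 - r) / (8 * r)) * (norm (x 0 - x_of u))\<^sup>2 / \<gamma> / real N"
  proof (rule divide_right_mono)
    show "(\<Sum>t<N. F (z (Suc t)) + g_z (Suc t) - F u - gu)
        \<le> ((1 - r) / (8 * r)) * (norm (x 0 - x_of u))\<^sup>2 / \<gamma>"
      unfolding pos_le_divide_eq[OF gamma_pos]
      using objective_gap_sum_le[OF min Gu, of N] by (simp add: mult.commute)
  qed simp
  also have "\<dots> = 1 / (40 * \<gamma> * real N * L) * (1 / \<gamma> - 5 * L) * (norm (x 0 - x_of u))\<^sup>2"
    using gamma_pos L_pos N by (simp add: r_def field_simps)
  finally show ?thesis
    using gN(1) Gu by simp
qed

end

theorem theorem4: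
  fixes F :: "'a::euclidean_space \<Rightarrow> real"
    and gradF :: "'a \<Rightarrow> 'a"
    and G :: "'a \<Rightarrow> ereal"
    and L \<gamma> :: real
    and x y z :: "nat \<Rightarrow> 'a"
    and yb zb xb :: 'a
  assumes F_convex: "convex_on UNIV F"
    and F_grad: "\<And>u. (F has_derivative (\<lambda>h. gradF u \<bullet> h)) (at u)"
    and L_pos: "L > 0"
    and grad_Lip: "\<And>u v. norm (gradF u - gradF v) \<le> L * norm (u - v)"
    and G_proper: "proper_fun G"
    and G_lsc: "lsc_fun G"
    and G_convex: "convex_efun G"
    and G_prox: "\<And>w \<tau>. \<tau> > 0 \<Longrightarrow> \<exists>u. \<forall>v.
        ereal \<tau> * G u + ereal ((1/2) * (norm (u - w))\<^sup>2)
          \<le> ereal \<tau> * G v + ereal ((1/2) * (norm (v - w))\<^sup>2)"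
    and coercive: "coercive_efun (\<lambda>u. ereal (F u) + G u)"
    and gamma_pos: "\<gamma> > 0"
    and gamma_small: "\<gamma> < 1 / (12 * L)"
    and y_step: "\<And>t w.
        F (y (Suc t)) + (5 * L / 2) * (norm (y (Suc t)))\<^sup>2
          + (1 / (2 * \<gamma>)) * (norm (y (Suc t) - x t))\<^sup>2
        \<le> F w + (5 * L / 2) * (norm w)\<^sup>2 + (1 / (2 * \<gamma>)) * (norm (w - x t))\<^sup>2"
    and z_step: "\<And>t w.
        G (z (Suc t)) - ereal ((5 * L / 2) * (norm (z (Suc t)))\<^sup>2)
          + ereal ((1 / (2 * \<gamma>)) * (norm (2 *\<^sub>R y (Suc t) - x t - z (Suc t)))\<^sup>2)
        \<le> G w - ereal ((5 * L / 2) * (norm w)\<^sup>2)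
          + ereal ((1 / (2 * \<gamma>)) * (norm (2 *\<^sub>R y (Suc t) - x t - w))\<^sup>2)"
    and x_step: "\<And>t. x (Suc t) = x t + 2 *\<^sub>R (z (Suc t) - y (Suc t))"
    and cluster: "\<exists>r. strict_mono r \<and>
        ((\<lambda>k. (y (r k), z (r k), x (r k))) \<longlongrightarrow> (yb, zb, xb)) sequentially"
  shows "yb = zb
    \<and> (\<forall>u. ereal (F zb) + G zb \<le> ereal (F u) + G u)
    \<and> (\<forall>N::nat. N \<ge> 1 \<longrightarrow>
         (let zN = (1 / real N) *\<^sub>R (\<Sum>t = 1..N. z t) in
           ereal (F zN) + G zN - ereal (F zb) - G zb
             \<le> ereal (1 / (40 * \<gamma> * real N * L) * (1 / \<gamma> - 5 * L)
                        * (norm (x 0 - xb))\<^sup>2)))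
    \<and> (\<lambda>N. Min ((\<lambda>t. norm (x (Suc t) - x t)) ` {0..N}))
        \<in> o(\<lambda>N. 1 / sqrt (real N))"
  proof -
  \<comment> \<open>G_prox only makes the z-update well defined; the iterates are given.\<close>
  interpret modified_PR F gradF G L \<gamma> x y z
    by unfold_locales (fact assms)+
  obtain \<rho> where \<rho>: "strict_mono \<rho>"
    and lim: "((\<lambda>k. (y (\<rho> k), z (\<rho> k), x (\<rho> k))) \<longlongrightarrow> (yb, zb, xb)) sequentially"
    using cluster by blast
  have lim_y: "(\<lambda>k. y (\<rho> k)) \<longlonglongrightarrow> yb"
    and lim_z: "(\<lambda>k. z (\<rho> k)) \<longlonglongrightarrow> zb"
    and lim_x: "(\<lambda>k. x (\<rho> k)) \<longlonglongrightarrow> xb"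
    using tendsto_fst[OF lim] tendsto_fst[OF tendsto_snd[OF lim]] tendsto_snd[OF tendsto_snd[OF lim]]
    by simp_all
  have "yb = zb" and xb: "xb = x_of zb"
    by (rule cluster_point_eqs[OF \<rho> lim_y lim_z lim_x])+
  have min: "\<And>w. ereal (F zb) + G zb \<le> ereal (F w) + G w"
    using cluster_point_minimizer[OF \<rho> lim_z] lim_x xb by simp
  then obtain gb where "G zb = ereal gb"
    by (rule minimizer_finite)
  from ergodic_objective_rate[OF min this] xb
  have rate: "\<forall>N::nat. N \<ge> 1 \<longrightarrow>
      (let zN = (1 / real N) *\<^sub>R (\<Sum>t = 1..N. z t) in
        ereal (F zN) + G zN - ereal (F zb) - G zb
          \<le> ereal (1 / (40 * \<gamma> * real N * L) * (1 / \<gamma> - 5 * L) * (norm (x 0 - xb))\<^sup>2))"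
    by (simp add: Let_def)
  have "(\<lambda>N. Min ((\<lambda>t. norm (x (Suc t) - x t)) ` {0..N})) \<in> o(\<lambda>N. 1 / sqrt (real N))"
    by (rule Min_prefix_smallo_of_summable_squares) (use summable_dx_sq in auto)
  with \<open>yb = zb\<close> min rate show ?thesis
    by blast
qed

end
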